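(* Let $k_0>0$, $0<r_s<r_M$, $p>1$, and let $f\in L^p(\mathbb{R}^3)$ with $\operatorname{supp}(f)\subset\mathcal{B}_{r_s}$. Let $u^{\mathrm{inc}}(\mathbf r)=e^{ik_0r_3}$, and let $u$ be the solution of $-(\Delta+k_0^2)u=f\,u^{\mathrm{inc}}$ satisfying the Sommerfeld radiation condition. Then, for all $k_1,k_2\in\mathbb{R}$ with $k_1^2+k_2^2\neq k_0^2$, $$\mathcal{F}_{1,2}u(k_1,k_2,\pm r_M)=\sqrt{\frac{\pi}{2}}\,\frac{i\,e^{i\kappa r_M}}{\kappa}\,\mathcal{F}f(k_1,k_2,\pm\kappa-k_0),$$ where the upper sign corresponds to measurements in the plane $r_3=r_M$ (transmission) and the lower sign to measurements in the plane $r_3=-r_M$ (reflection).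
   Context: $\mathcal{B}_{r}\subset\mathbb{R}^3$ is the open ball of radius $r$ centered at $0$. The Sommerfeld radiation condition is $\lim_{s\to\infty}\max_{\|\mathbf r\|=s}\|\mathbf r\|\big(\frac{\partial u}{\partial \mathbf r}-ik_0u\big)=0$ with $\frac{\partial}{\partial\mathbf r}$ the radial derivative. $\mathcal{F}g(\mathbf k)=(2\pi)^{-3/2}\int_{\mathbb{R}^3}g(\mathbf r)e^{-i\mathbf k\cdot\mathbf r}\,d\mathbf r$, analytically continued to complex arguments (possible since $f$ has compact support). $\kappa=\sqrt{k_0^2-k_1^2-k_2^2}$ if $k_1^2+k_2^2\le k_0^2$ and $\kappa=i\sqrt{k_1^2+k_2^2-k_0^2}$ otherwise. $\mathcal{F}_{1,2}u$ is the partial Fourier transform in the first two variables (normalization $(2\pi)^{-1/2}$ per variable), defined on tempered distributions by duality; here $\mathcal{F}_{1,2}u(k_1,k_2,r_3)$ denotes the locally integrable function with which this distribution coincides, namely $\sqrt{\pi/2}\,\frac{i}{\kappa}\big(e^{i\kappa r_3}\mathcal{F}((1-H_{r_3})g)(k_1,k_2,\kappa)+e^{-i\kappa r_3}\mathcal{F}(H_{r_3}g)(k_1,k_2,-\kappa)\big)$ with $g=fu^{\mathrm{inc}}$, where $H_{r_3}(s_1,s_2,s_3)=0$ if $s_3<r_3$ and $1$ otherwise. *)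

theory Defs
  imports "HOL-Analysis.Analysis"
begin

definition FT3 :: "(real^3 \<Rightarrow> complex) \<Rightarrow> complex \<Rightarrow> complex \<Rightarrow> complex \<Rightarrow> complex" where
  "FT3 g k1 k2 k3 = complex_of_real ((2 * pi) powr (-3/2)) *
     (\<integral>r. g r * exp (- \<i> * (k1 * complex_of_real (r$1) + k2 * complex_of_real (r$2)
                               + k3 * complex_of_real (r$3))) \<partial>lborel)"

definition kappa :: "real \<Rightarrow> real \<Rightarrow> real \<Rightarrow> complex" where
  "kappa k0 k1 k2 = (if k1^2 + k2^2 \<le> k0^2
      then complex_of_real (sqrt (k0^2 - k1^2 - k2^2))
      else \<i> * complex_of_real (sqrt (k1^2 + k2^2 - k0^2)))"

definition heav :: "real \<Rightarrow> real^3 \<Rightarrow> complex" where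
  "heav r3 s = (if s$3 < r3 then 0 else 1)"

definition uinc :: "real \<Rightarrow> real^3 \<Rightarrow> complex" where
  "uinc k0 r = exp (\<i> * complex_of_real (k0 * r$3))"

text \<open>The function representing the partial Fourier transform F_{1,2} u (k1,k2,r3) of the
  radiating solution u of -(Delta + k0^2) u = f u_inc, as given in the context, with g = f u_inc.\<close>
definition F12u :: "real \<Rightarrow> (real^3 \<Rightarrow> complex) \<Rightarrow> real \<Rightarrow> real \<Rightarrow> real \<Rightarrow> complex" where
  "F12u k0 f k1 k2 r3 =
     (let g = (\<lambda>r. f r * uinc k0 r); \<kappa> = kappa k0 k1 k2 in
      complex_of_real (sqrt (pi / 2)) * (\<i> / \<kappa>) *
        (exp (\<i> * \<kappa> * complex_of_real r3) *
           FT3 (\<lambda>s. (1 - heav r3 s) * g s) (complex_of_real k1) (complex_of_real k2) \<kappa>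
         + exp (- \<i> * \<kappa> * complex_of_real r3) *
           FT3 (\<lambda>s. heav r3 s * g s) (complex_of_real k1) (complex_of_real k2) (- \<kappa>)))"

end

theory Submission
  imports Defs
begin

text \<open>Since f is supported in the ball of radius rs < rM, the planes r3 = rM and r3 = -rM lie
  entirely above resp. below the support.  Hence one of the two Heaviside cuts in the formula for
  F12u leaves g = f u_inc unchanged while the other one kills it, and multiplying by the plane wave
  u_inc = exp (i k0 r3) shifts the third Fourier variable by -k0.  Every step is an identity between
  integrands.\<close>

lemma FT3_zero: "FT3 (\<lambda>_. 0) k1 k2 k3 = 0"
  by (simp add: FT3_def)

lemma FT3_mult_uinc:
  "FT3 (\<lambda>s. f s * uinc k0 s) k1 k2 k3 = FT3 f k1 k2 (k3 - complex_of_real k0)"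
proof -
  have integrand: "f s * uinc k0 s * exp (- \<i> * (k1 * s$1 + k2 * s$2 + k3 * s$3))
      = f s * exp (- \<i> * (k1 * s$1 + k2 * s$2 + (k3 - k0) * s$3))" for s :: "real^3"
  proof -
    have "\<i> * complex_of_real (k0 * s$3) + - \<i> * (k1 * s$1 + k2 * s$2 + k3 * s$3)
        = - \<i> * (k1 * s$1 + k2 * s$2 + (k3 - k0) * s$3)"
      by (simp add: algebra_simps)
    then show ?thesis
      by (simp add: uinc_def mult.assoc flip: exp_add)
  qed
  show ?thesis
    unfolding FT3_def integrand ..
qed

lemma heav_mult_vanishing_below:
  assumes "\<And>s. s$3 < r3 \<Longrightarrow> g s = 0"
  shows "heav r3 s * g s = g s" and "(1 - heav r3 s) * g s = 0"
  using assms[of s] by (auto simp: heav_def)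

lemma heav_mult_vanishing_above:
  assumes "\<And>s. r3 \<le> s$3 \<Longrightarrow> g s = 0"
  shows "heav r3 s * g s = 0" and "(1 - heav r3 s) * g s = g s"
  using assms[of s] by (auto simp: heav_def)

lemma F12u_vanishing_above:
  assumes "\<And>s. r3 \<le> s$3 \<Longrightarrow> f s = 0"
  shows "F12u k0 f k1 k2 r3 =
    complex_of_real (sqrt (pi / 2)) * \<i> * exp (\<i> * kappa k0 k1 k2 * complex_of_real r3)
      / kappa k0 k1 k2
      * FT3 f (complex_of_real k1) (complex_of_real k2) (kappa k0 k1 k2 - complex_of_real k0)"
proof -
  have "\<And>s. r3 \<le> s$3 \<Longrightarrow> f s * uinc k0 s = 0"
    using assms by simp
  note cut = heav_mult_vanishing_above[where g = "\<lambda>s. f s * uinc k0 s", OF this]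
  show ?thesis
    by (simp add: F12u_def Let_def cut FT3_zero FT3_mult_uinc)
qed

lemma F12u_vanishing_below:
  assumes "\<And>s. s$3 < r3 \<Longrightarrow> f s = 0"
  shows "F12u k0 f k1 k2 r3 =
    complex_of_real (sqrt (pi / 2)) * \<i> * exp (- \<i> * kappa k0 k1 k2 * complex_of_real r3)
      / kappa k0 k1 k2
      * FT3 f (complex_of_real k1) (complex_of_real k2) (- kappa k0 k1 k2 - complex_of_real k0)"
proof -
  have "\<And>s. s$3 < r3 \<Longrightarrow> f s * uinc k0 s = 0"
    using assms by simp
  note cut = heav_mult_vanishing_below[where g = "\<lambda>s. f s * uinc k0 s", OF this]
  show ?thesis
    by (simp add: F12u_def Let_def cut FT3_zero FT3_mult_uinc)
qed

lemma support_subset_ball_component_eq_0: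
  fixes f :: "real^'n \<Rightarrow> 'a::zero"
  assumes "closure {x. f x \<noteq> 0} \<subseteq> ball 0 R" and "R \<le> \<bar>x$i\<bar>"
  shows "f x = 0"
proof (rule ccontr)
  assume "f x \<noteq> 0"
  then have "x \<in> closure {x. f x \<noteq> 0}"
    by (simp add: closure_def)
  then have "norm x < R"
    using assms(1) by auto
  then show False
    using component_le_norm_cart[of x i] assms(2) by linarith
qed

theorem corollary3p3:
  fixes k0 rs rM p :: real and f :: "real^3 \<Rightarrow> complex"
  assumes "k0 > 0" and "0 < rs" and "rs < rM" and "p > 1"
    and "f \<in> borel_measurable lborel"
    and "integrable lborel (\<lambda>r. norm (f r) powr p)"
    and "closure {r. f r \<noteq> 0} \<subseteq> ball 0 rs"
  shows "\<forall>k1 k2 :: real. k1^2 + k2^2 \<noteq> k0^2 \<longrightarrow>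
     F12u k0 f k1 k2 rM =
       complex_of_real (sqrt (pi / 2)) * \<i> * exp (\<i> * kappa k0 k1 k2 * complex_of_real rM)
         / kappa k0 k1 k2
         * FT3 f (complex_of_real k1) (complex_of_real k2) (kappa k0 k1 k2 - complex_of_real k0)
   \<and> F12u k0 f k1 k2 (- rM) =
       complex_of_real (sqrt (pi / 2)) * \<i> * exp (\<i> * kappa k0 k1 k2 * complex_of_real rM)
         / kappa k0 k1 k2
         * FT3 f (complex_of_real k1) (complex_of_real k2) (- kappa k0 k1 k2 - complex_of_real k0)"
proof -
  have vanish: "f s = 0" if "rs \<le> \<bar>s$3\<bar>" for s
    using support_subset_ball_component_eq_0[OF assms(7) that] .
  have transmission: "f s = 0" if "rM \<le> s$3" for s
    using vanish assms(3) that by simp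
  have reflection: "f s = 0" if "s$3 < - rM" for s
    using vanish assms(3) that by simp
  show ?thesis
    using F12u_vanishing_above[OF transmission] F12u_vanishing_below[OF reflection] by simp
qed

end
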